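(* Every proper metric space (i.e. one whose closed balls are compact) has property (P) for nets.
   Context: For a nonempty subset $C$ of a metric space $X$, ${\rm cov}(C)$ is the intersection of all closed balls of $X$ containing $C$. Property (P) for nets: for any directed (pre)ordered index set $(I,\le)$ and any two bounded nets $\{x_s\}_{s\in I}$, $\{z_s\}_{s\in I}$ in $X$ with $z_s\in{\rm cov}(\{x_j:j\ge s\})$ for every $s$, there is $z\in\bigcap_s{\rm cov}(\{z_j:j\ge s\})$ such that $\limsup_s d(z,x_s)\le\limsup_t\limsup_s d(z_t,x_s)$. *)

theory Defs
  imports "HOL-Analysis.Analysis" "HOL-Library.Extended_Real"
begin

definition proper_metric :: "'a::metric_space itself \<Rightarrow> bool" where
  "proper_metric _ \<longleftrightarrow> (\<forall>(x::'a) r. compact (cball x r))"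

definition cov :: "'a::metric_space set \<Rightarrow> 'a set" where
  "cov C = \<Inter> {cball a r | a r. C \<subseteq> cball a r}"

definition directed_preorder :: "('i \<Rightarrow> 'i \<Rightarrow> bool) \<Rightarrow> bool" where
  "directed_preorder le \<longleftrightarrow> (\<forall>a. le a a) \<and> (\<forall>a b c. le a b \<longrightarrow> le b c \<longrightarrow> le a c)
     \<and> (\<forall>a b. \<exists>c. le a c \<and> le b c)"

definition net_limsup :: "('i \<Rightarrow> 'i \<Rightarrow> bool) \<Rightarrow> ('i \<Rightarrow> ereal) \<Rightarrow> ereal" where
  "net_limsup le f = (INF s. SUP j\<in>{j. le s j}. f j)"

end

(* The witness is any cluster point w of the net z, which exists because z lies in a compact
   closed ball. Since cov C is closed and contains C, w lies in every cov {z j | s \<le> j}.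
   By the triangle inequality limsup_s d(w, x s) \<le> d(w, z t) + limsup_s d(z t, x s) for every t,
   and letting z t approach w frequently along the net gives the claimed bound. *)
theory Submission
  imports Defs
begin

lemma directed_preorder_finite_upper_bound:
  assumes "directed_preorder le" and "finite I"
  shows "\<exists>c. \<forall>i\<in>I. le i c"
  using assms(2)
proof (induction I rule: finite_induct)
  case empty
  then show ?case by simp
next
  case (insert a I)
  then obtain c where "\<forall>i\<in>I. le i c" by blast
  moreover obtain d where "le a d" "le c d"
    using assms(1) unfolding directed_preorder_def by blast
  moreover have "\<And>i. le i c \<Longrightarrow> le i d"
    using \<open>le c d\<close> assms(1) unfolding directed_preorder_def by blast
  ultimately show ?case by blast
qed

lemma net_cluster_point_exists:
  fixes z :: "'i \<Rightarrow> 'a::topological_space"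
  assumes "directed_preorder le" and "compact K" and "range z \<subseteq> K"
  shows "\<exists>w\<in>K. \<forall>i. w \<in> closure {z j | j. le i j}"
proof -
  have "K \<inter> (\<Inter>i\<in>UNIV. closure {z j | j. le i j}) \<noteq> {}"
  proof (rule compact_imp_fip_image[OF \<open>compact K\<close>])
    fix I :: "'i set"
    assume "finite I"
    then obtain c where "\<forall>i\<in>I. le i c"
      using directed_preorder_finite_upper_bound[OF assms(1)] by blast
    then have "z c \<in> K \<inter> (\<Inter>i\<in>I. closure {z j | j. le i j})"
      using assms(3) by (auto intro: closure_subset[THEN subsetD])
    then show "K \<inter> (\<Inter>i\<in>I. closure {z j | j. le i j}) \<noteq> {}"
      by blast
  qed simp
  then show ?thesis by blast
qed

lemma closed_cov: "closed (cov C)"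
  unfolding cov_def by (intro closed_Inter) auto

lemma subset_cov: "C \<subseteq> cov C"
  unfolding cov_def by blast

lemma closure_subset_cov: "closure C \<subseteq> cov C"
  by (rule closure_minimal[OF subset_cov closed_cov])

lemma net_limsup_mono:
  assumes "\<And>s. f s \<le> g s"
  shows "net_limsup le f \<le> net_limsup le g"
  unfolding net_limsup_def by (intro INF_mono' SUP_mono' assms)

lemma net_limsup_add_const:
  assumes "\<And>a. le a a" and "\<And>s. 0 \<le> f s"
  shows "net_limsup le (\<lambda>s. ereal c + f s) = ereal c + net_limsup le f"
proof -
  have nonempty: "{j. le s j} \<noteq> {}" for s
    using assms(1) by blast
  have "0 \<le> (SUP j\<in>{j. le s j}. f j)" for s
    using assms by (meson SUP_upper2 mem_Collect_eq)
  then show ?thesis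
    unfolding net_limsup_def
    by (simp add: SUP_ereal_add_right[OF nonempty] INF_ereal_add_right)
qed

lemma net_limsup_dist_triangle:
  assumes "\<And>a. le a a"
  shows "net_limsup le (\<lambda>s. ereal (dist w (x s)))
    \<le> ereal (dist w v) + net_limsup le (\<lambda>s. ereal (dist v (x s)))"
proof -
  have "net_limsup le (\<lambda>s. ereal (dist w (x s)))
      \<le> net_limsup le (\<lambda>s. ereal (dist w v) + ereal (dist v (x s)))"
    by (rule net_limsup_mono) (simp add: dist_triangle)
  also have "\<dots> = ereal (dist w v) + net_limsup le (\<lambda>s. ereal (dist v (x s)))"
    using assms by (rule net_limsup_add_const) simp
  finally show ?thesis .
qed

lemma net_limsup_ge_at_cluster_point:
  fixes z :: "'i \<Rightarrow> 'a::metric_space"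
  assumes cluster: "\<And>i. w \<in> closure {z j | j. le i j}"
    and bound: "\<And>t. L \<le> ereal (dist w (z t)) + f t"
  shows "L \<le> net_limsup le f"
  unfolding net_limsup_def
proof (rule INF_greatest)
  fix i
  show "L \<le> (SUP j\<in>{j. le i j}. f j)"
  proof (rule ereal_le_epsilon2)
    fix e :: real
    assume "0 < e"
    then obtain t where t: "le i t" "dist w (z t) < e"
      using cluster[of i] unfolding closure_approachable by (auto simp: dist_commute)
    have "L \<le> ereal (dist w (z t)) + f t"
      by (rule bound)
    also have "\<dots> \<le> ereal e + (SUP j\<in>{j. le i j}. f j)"
      using t by (intro add_mono) (auto intro: SUP_upper)
    finally show "L \<le> (SUP j\<in>{j. le i j}. f j) + ereal e"
      by (simp add: add.commute)
  qed
qed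

theorem lemma5p2:
  fixes le :: "'i \<Rightarrow> 'i \<Rightarrow> bool" and x z :: "'i \<Rightarrow> 'a::metric_space"
  assumes "proper_metric TYPE('a)"
    and "directed_preorder le"
    and "bounded (range x)" and "bounded (range z)"
    and "\<And>s. z s \<in> cov {x j | j. le s j}"
  shows "\<exists>w. (\<forall>s. w \<in> cov {z j | j. le s j}) \<and>
    net_limsup le (\<lambda>s. ereal (dist w (x s)))
      \<le> net_limsup le (\<lambda>t. net_limsup le (\<lambda>s. ereal (dist (z t) (x s))))"
proof -
  have refl: "\<And>a. le a a"
    using assms(2) unfolding directed_preorder_def by blast
  obtain a R where "range z \<subseteq> cball a R"
    using assms(4) bounded_subset_cball by blast
  moreover have "compact (cball a R)"
    using assms(1) unfolding proper_metric_def by blast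
  ultimately obtain w where cluster: "\<And>i. w \<in> closure {z j | j. le i j}"
    using net_cluster_point_exists[OF assms(2)] by blast
  have "\<forall>s. w \<in> cov {z j | j. le s j}"
    using cluster closure_subset_cov by blast
  moreover have "net_limsup le (\<lambda>s. ereal (dist w (x s)))
      \<le> net_limsup le (\<lambda>t. net_limsup le (\<lambda>s. ereal (dist (z t) (x s))))"
    using cluster net_limsup_dist_triangle[OF refl]
    by (rule net_limsup_ge_at_cluster_point)
  ultimately show ?thesis by blast
qed

end
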